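(* Let $A_0\in\mathbb{R}^{n\times n}$, $B\in\mathbb{R}^{n\times1}$, $K\in\mathbb{R}^{1\times n}$, $h\in\mathbb{R}$, $P_0\in\mathbb{R}^{n\times n}$ symmetric, and let $V(x)=\tfrac12\big(x^\top P_0x+h(x^\top K^\top Kx-\mathrm{dz}(Kx)^2)\big)$. Suppose the matching condition $P_0B-hA_0^\top K^\top=\mu K^\top$ holds for some $\mu\ge0$, and that $2\mu+\omega>0$ where $\omega:=2hKB$. Then, with $S_0:=-(A_0^\top P_0+P_0A_0)$, the directional derivative of $V$ along $\dot x=A_0x-B\,\mathrm{sat}(Kx)$ satisfies, for almost all $x\in\mathbb{R}^n$, $$\dot V(x)=-\tfrac12\begin{bmatrix}x\\ \mathrm{dz}(Kx)\end{bmatrix}^\top Q\begin{bmatrix}x\\ \mathrm{dz}(Kx)\end{bmatrix},\qquad Q=\begin{bmatrix}S_0+(2\mu+\omega)K^\top K&-(\mu+\omega)K^\top\\ -(\mu+\omega)K&\omega\end{bmatrix}.$$ Moreover, if in addition $P_0\succeq0$, $A_0^\top P_0+P_0A_0\preceq0$ and $\ker P_0\subseteq\ker A_0$, then there exist $T_0\ge0$ and $R>0$ such that $\tfrac12 Q-\Sigma_0-\Sigma_R\succeq0$; in particular $-\dot V(x)\ge R\,\mathrm{sat}(Kx)^2$ for almost all $x$.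
   Context: Single-input case: $\mathrm{sat}(s)=\min\{\overline{u},\max\{-\underline{u},s\}\}$ with $\overline{u},\underline{u}>0$, $\mathrm{dz}(s)=s-\mathrm{sat}(s)$. For scalars $T_0,R$: $\Sigma_0=\begin{bmatrix}0&K^\top T_0\\ T_0K&-2T_0\end{bmatrix}$, $\Sigma_R=\begin{bmatrix}K^\top RK&-K^\top R\\ -RK&R\end{bmatrix}$. *)

theory Defs
  imports "HOL-Analysis.Analysis"
begin

definition sat :: "real \<Rightarrow> real \<Rightarrow> real \<Rightarrow> real" where
  "sat ubar ulow s = min ubar (max (- ulow) s)"

definition dz :: "real \<Rightarrow> real \<Rightarrow> real \<Rightarrow> real" where
  "dz ubar ulow s = s - sat ubar ulow s"

definition psd :: "real^'m^'m \<Rightarrow> bool" where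
  "psd M \<longleftrightarrow> (\<forall>v. 0 \<le> v \<bullet> (M *v v))"

text \<open>Outer product u v^T (for row vector K: K^T K = outer K K).\<close>
definition outer :: "real^'n \<Rightarrow> real^'n \<Rightarrow> real^'n^'n" where
  "outer u v = (\<chi> i j. u $ i * v $ j)"

definition blk :: "real^'n^'n \<Rightarrow> real^'n \<Rightarrow> real^'n \<Rightarrow> real \<Rightarrow> real^('n + unit)^('n + unit)" where
  "blk M b c d = (\<chi> i j. case i of
       Inl i' \<Rightarrow> (case j of Inl j' \<Rightarrow> M $ i' $ j' | Inr _ \<Rightarrow> b $ i')
     | Inr _ \<Rightarrow> (case j of Inl j' \<Rightarrow> c $ j' | Inr _ \<Rightarrow> d))"

definition stack :: "real^'n \<Rightarrow> real \<Rightarrow> real^('n + unit)" where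
  "stack x d = (\<chi> i. case i of Inl i' \<Rightarrow> x $ i' | Inr _ \<Rightarrow> d)"

definition dir_deriv :: "(real^'n \<Rightarrow> real) \<Rightarrow> (real^'n \<Rightarrow> real^'n) \<Rightarrow> real^'n \<Rightarrow> real \<Rightarrow> bool" where
  "dir_deriv V f x D \<longleftrightarrow> ((\<lambda>t. V (x + t *\<^sub>R f x)) has_real_derivative D) (at 0)"

definition Vfun :: "real \<Rightarrow> real \<Rightarrow> real^'n^'n \<Rightarrow> real \<Rightarrow> real^'n \<Rightarrow> real^'n \<Rightarrow> real" where
  "Vfun ubar ulow P0 h K x =
     (1/2) * (x \<bullet> (P0 *v x) + h * ((K \<bullet> x)^2 - (dz ubar ulow (K \<bullet> x))^2))"

definition ffun :: "real \<Rightarrow> real \<Rightarrow> real^'n^'n \<Rightarrow> real^'n \<Rightarrow> real^'n \<Rightarrow> real^'n \<Rightarrow> real^'n" where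
  "ffun ubar ulow A0 B K x = A0 *v x - sat ubar ulow (K \<bullet> x) *\<^sub>R B"

definition Qmat :: "real^'n^'n \<Rightarrow> real^'n^'n \<Rightarrow> real^'n \<Rightarrow> real \<Rightarrow> real \<Rightarrow> real^('n + unit)^('n + unit)" where
  "Qmat A0 P0 K \<mu> \<omega> =
     blk (- (transpose A0 ** P0 + P0 ** A0) + (2 * \<mu> + \<omega>) *\<^sub>R outer K K)
         (- (\<mu> + \<omega>) *\<^sub>R K) (- (\<mu> + \<omega>) *\<^sub>R K) \<omega>"

definition Sigma0 :: "real^'n \<Rightarrow> real \<Rightarrow> real^('n + unit)^('n + unit)" where
  "Sigma0 K T0 = blk 0 (T0 *\<^sub>R K) (T0 *\<^sub>R K) (- 2 * T0)"

definition SigmaR :: "real^'n \<Rightarrow> real \<Rightarrow> real^('n + unit)^('n + unit)" where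
  "SigmaR K R = blk (R *\<^sub>R outer K K) (- R *\<^sub>R K) (- R *\<^sub>R K) R"

end

theory Submission
  imports Defs
begin

text \<open>
  Since (dz s)^2 = (max 0 (s - ubar))^2 + (max 0 (- s - ulow))^2 is C^1 with
  derivative 2 dz s, V is differentiable at every point, and along any vector field F its
  derivative is x' P0 F + h sat(Kx) KF. For the closed loop, the matching condition turns this into
  x' P0 A0 x - \<mu> sat(Kx) Kx - (\<omega>/2) sat(Kx)^2, which is -1/2 times the quadratic form of Q
  at (x, dz(Kx)) because dz(Kx) = Kx - sat(Kx).
  The S-procedure multipliers T0 = \<mu>/2 and R = \<mu> + \<omega>/2 cancel every entry of Q/2
  outside the S0/2 block, so Q/2 - \<Sigma>0 - \<Sigma>R = diag(S0/2, 0). At (x, dz(Kx)) the \<Sigma>0 form equals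
  2 T0 dz(Kx) sat(Kx) \<ge> 0 and the \<Sigma>R form equals R sat(Kx)^2, which gives the bound.
\<close>

lemma stack_blk_quadratic_form:
  "stack x d \<bullet> (blk M b c e *v stack x d) = x \<bullet> (M *v x) + d * (b \<bullet> x) + d * (c \<bullet> x) + e * d\<^sup>2"
proof -
  have sum_Plus: "(\<Sum>i\<in>UNIV. g i) = (\<Sum>i\<in>UNIV. g (Inl i)) + g (Inr ())"
    for g :: "'a::finite + unit \<Rightarrow> real"
    by (simp add: UNIV_Plus_UNIV[symmetric] sum.Plus UNIV_unit del: UNIV_Plus_UNIV)
  show ?thesis
    by (simp add: inner_vec_def matrix_vector_mult_def blk_def stack_def sum_Plus
        algebra_simps sum.distrib sum_distrib_left power2_eq_square)
qed

lemma stack_components: "stack (\<chi> i. v $ Inl i) (v $ Inr ()) = v"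
  by (simp add: stack_def vec_eq_iff split: sum.split)

lemma psd_blk_iff:
  "psd (blk M b c e) \<longleftrightarrow> (\<forall>x d. 0 \<le> x \<bullet> (M *v x) + d * (b \<bullet> x) + d * (c \<bullet> x) + e * d\<^sup>2)"
  unfolding psd_def by (metis stack_blk_quadratic_form stack_components)

lemma psd_blk_0: "psd (blk M 0 0 0) \<longleftrightarrow> psd M"
  unfolding psd_blk_iff by (simp add: psd_def)

lemma inner_outer_mult: "x \<bullet> (outer u v *v x) = (u \<bullet> x) * (v \<bullet> x)"
  by (simp add: outer_def inner_vec_def matrix_vector_mult_def sum_product sum_distrib_left
      algebra_simps) (subst sum.swap, simp add: ac_simps)

lemma inner_mult_transpose: "x \<bullet> (transpose A *v y) = (A *v x) \<bullet> (y :: real^'n)"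
  by (metis dot_lmul_matrix inner_commute vector_transpose_matrix)

lemma has_real_derivative_max_0_squared:
  "((\<lambda>u::real. (max 0 u)\<^sup>2) has_real_derivative 2 * max 0 u) (at u)"
proof (cases "u = 0")
  case True
  have "((\<lambda>y::real. max 0 y) \<longlongrightarrow> 0) (at 0)"
    using tendsto_max[OF tendsto_const tendsto_ident_at, of 0 0 UNIV] by simp
  moreover have "max 0 y = ((max 0 y)\<^sup>2 - (max 0 0)\<^sup>2) / (y - 0)" if "y \<noteq> 0" for y :: real
    using that by (auto simp: power2_eq_square max_def)
  ultimately show ?thesis
    using True by (auto simp: has_field_derivative_iff eventually_at_filter
        elim!: Lim_transform_eventually)
next
  case False
  then consider "u > 0" | "u < 0" by linarith
  then show ?thesis
  proof cases
    case 1
    have "((\<lambda>u::real. u\<^sup>2) has_real_derivative 2 * u) (at u)"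
      by (auto intro!: derivative_eq_intros)
    then show ?thesis
      using 1 by (auto intro: has_field_derivative_transform_within_open[where S = "{0<..}"])
  next
    case 2
    have "((\<lambda>u::real. (max 0 u)\<^sup>2) has_real_derivative 0) (at u)"
      by (rule has_field_derivative_transform_within_open[OF DERIV_const, where S = "{..<0}"])
        (use 2 in auto)
    then show ?thesis
      using 2 by simp
  qed
qed

lemma dz_eq_max:
  assumes "- ulow \<le> ubar"
  shows "dz ubar ulow s = max 0 (s - ubar) - max 0 (- s - ulow)"
  using assms by (auto simp: dz_def sat_def max_def min_def)

lemma has_real_derivative_dz_squared:
  assumes "- ulow \<le> ubar"
  shows "((\<lambda>s. (dz ubar ulow s)\<^sup>2) has_real_derivative 2 * dz ubar ulow s) (at s)"
proof -
  have "(dz ubar ulow s)\<^sup>2 = (max 0 (s - ubar))\<^sup>2 + (max 0 (- s - ulow))\<^sup>2" for s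
    using assms by (simp add: dz_eq_max power2_diff max_def)
  moreover have "((\<lambda>s. (max 0 (s - ubar))\<^sup>2 + (max 0 (- s - ulow))\<^sup>2) has_real_derivative
      2 * max 0 (s - ubar) * 1 + 2 * max 0 (- s - ulow) * (- 1)) (at s)"
    by (intro DERIV_add DERIV_chain2[OF has_real_derivative_max_0_squared])
      (auto intro!: derivative_eq_intros)
  ultimately show ?thesis
    using assms by (simp add: dz_eq_max algebra_simps)
qed

lemma dz_mult_sat_nonneg:
  assumes "0 \<le> ubar" "0 \<le> ulow"
  shows "0 \<le> dz ubar ulow s * sat ubar ulow s"
proof -
  consider "ubar \<le> s" | "s \<le> - ulow" | "- ulow < s \<and> s < ubar"
    by linarith
  then show ?thesis
    using assms by cases (auto simp: dz_def sat_def mult_nonpos_nonneg)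
qed

lemma dir_deriv_Vfun:
  fixes P0 :: "real^'n^'n"
  assumes "- ulow \<le> ubar" and symP0: "transpose P0 = P0"
  shows "dir_deriv (Vfun ubar ulow P0 h K) F x
    (x \<bullet> (P0 *v F x) + h * sat ubar ulow (K \<bullet> x) * (K \<bullet> F x))"
proof -
  define f y k where "f = F x" and "y = K \<bullet> x" and "k = K \<bullet> f"
  define g where "g = (\<lambda>t. (dz ubar ulow (y + t * k))\<^sup>2)"
  have "f \<bullet> (P0 *v x) = x \<bullet> (P0 *v f)"
    by (metis inner_commute inner_mult_transpose symP0)
  then have V: "Vfun ubar ulow P0 h K (x + t *\<^sub>R f) = (1/2) * (x \<bullet> (P0 *v x)
      + 2 * t * (x \<bullet> (P0 *v f)) + t\<^sup>2 * (f \<bullet> (P0 *v f))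
      + h * ((y + t * k)\<^sup>2 - g t))" for t
    by (simp add: Vfun_def y_def k_def g_def inner_add_left inner_add_right matrix_vector_right_distrib
        matrix_vector_mult_scaleR power2_eq_square algebra_simps)
  have "((\<lambda>t. y + t * k) has_real_derivative k) (at 0)"
    by (auto intro!: derivative_eq_intros)
  from DERIV_chain2[OF has_real_derivative_dz_squared[OF assms(1), of "y + 0 * k"] this]
  have "(g has_real_derivative 2 * dz ubar ulow y * k) (at 0)"
    by (simp add: g_def)
  then have "((\<lambda>t. Vfun ubar ulow P0 h K (x + t *\<^sub>R f)) has_real_derivative
      x \<bullet> (P0 *v f) + h * (y - dz ubar ulow y) * k) (at 0)"
    unfolding V by (auto intro!: derivative_eq_intros simp: algebra_simps)
  then show ?thesis
    by (simp add: dir_deriv_def dz_def f_def y_def k_def)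
qed

lemma dir_deriv_closed_loop:
  fixes A0 P0 :: "real^'n^'n"
  assumes "- ulow \<le> ubar" and symP0: "transpose P0 = P0"
    and matching: "P0 *v B - h *\<^sub>R (transpose A0 *v K) = \<mu> *\<^sub>R K"
  shows "dir_deriv (Vfun ubar ulow P0 h K) (ffun ubar ulow A0 B K) x
    (x \<bullet> (P0 *v (A0 *v x)) - \<mu> * sat ubar ulow (K \<bullet> x) * (K \<bullet> x)
      - h * (K \<bullet> B) * (sat ubar ulow (K \<bullet> x))\<^sup>2)"
proof -
  have "P0 *v B = \<mu> *\<^sub>R K + h *\<^sub>R (transpose A0 *v K)"
    using matching by (metis diff_eq_eq add.commute)
  then have "x \<bullet> (P0 *v B) = \<mu> * (K \<bullet> x) + h * (K \<bullet> (A0 *v x))"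
    by (simp add: inner_add_right inner_commute inner_mult_transpose del: transpose_matrix_vector)
  with dir_deriv_Vfun[OF assms(1,2), of h K "ffun ubar ulow A0 B K" x] show ?thesis
    by (simp add: ffun_def matrix_vector_mult_diff_distrib matrix_vector_mult_scaleR inner_diff_right
        power2_eq_square algebra_simps)
qed

lemma Qmat_quadratic_form:
  fixes A0 P0 :: "real^'n^'n"
  assumes symP0: "transpose P0 = P0"
  shows "stack x d \<bullet> (Qmat A0 P0 K \<mu> \<omega> *v stack x d) = - 2 * (x \<bullet> (P0 *v (A0 *v x)))
    + (2 * \<mu> + \<omega>) * (K \<bullet> x)\<^sup>2 - 2 * (\<mu> + \<omega>) * d * (K \<bullet> x) + \<omega> * d\<^sup>2"
proof -
  have "x \<bullet> (transpose A0 *v (P0 *v x)) = x \<bullet> (P0 *v (A0 *v x))"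
    by (metis inner_commute inner_mult_transpose symP0)
  then show ?thesis
    by (simp add: Qmat_def stack_blk_quadratic_form inner_outer_mult matrix_vector_mult_add_rdistrib
        scaleR_matrix_vector_assoc[symmetric] matrix_vector_mul_assoc[symmetric] inner_add_right
        power2_eq_square algebra_simps)
qed

lemma Sigma0_quadratic_form:
  "stack x d \<bullet> (Sigma0 K T0 *v stack x d) = 2 * T0 * d * (K \<bullet> x - d)"
  by (simp add: Sigma0_def stack_blk_quadratic_form power2_eq_square algebra_simps)

lemma SigmaR_quadratic_form:
  "stack x d \<bullet> (SigmaR K R *v stack x d) = R * (K \<bullet> x - d)\<^sup>2"
  by (simp add: SigmaR_def stack_blk_quadratic_form inner_outer_mult
      scaleR_matrix_vector_assoc[symmetric] power2_eq_square algebra_simps)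

lemma Qmat_S_procedure_certificate:
  "(1/2) *\<^sub>R Qmat A0 P0 K \<mu> \<omega> - Sigma0 K (\<mu> / 2) - SigmaR K (\<mu> + \<omega> / 2)
    = blk ((1/2) *\<^sub>R - (transpose A0 ** P0 + P0 ** A0)) 0 0 0"
  by (simp add: Qmat_def Sigma0_def SigmaR_def blk_def vec_eq_iff outer_def field_simps
      split: sum.split)

lemma S_procedure_sat_bound:
  assumes "psd ((1/2) *\<^sub>R Q - Sigma0 K T0 - SigmaR K R)" "0 \<le> T0" "0 \<le> ubar" "0 \<le> ulow"
  shows "R * (sat ubar ulow (K \<bullet> x))\<^sup>2
    \<le> (1/2) * (stack x (dz ubar ulow (K \<bullet> x)) \<bullet> (Q *v stack x (dz ubar ulow (K \<bullet> x))))"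
proof -
  let ?v = "stack x (dz ubar ulow (K \<bullet> x))"
  have "0 \<le> ?v \<bullet> (((1/2) *\<^sub>R Q - Sigma0 K T0 - SigmaR K R) *v ?v)"
    using assms(1) by (simp add: psd_def)
  moreover have "0 \<le> T0 * (dz ubar ulow (K \<bullet> x) * sat ubar ulow (K \<bullet> x))"
    using assms(2-4) by (simp add: dz_mult_sat_nonneg)
  ultimately show ?thesis
    by (simp add: matrix_vector_mult_diff_rdistrib scaleR_matrix_vector_assoc[symmetric]
        inner_diff_right Sigma0_quadratic_form SigmaR_quadratic_form dz_def)
qed

theorem lemma2:
  fixes A0 P0 :: "real^'n^'n" and B K :: "real^'n" and h \<mu> ubar ulow :: real
  assumes ubar: "ubar > 0" and ulow: "ulow > 0"
    and symP0: "transpose P0 = P0"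
    and matching: "P0 *v B - h *\<^sub>R (transpose A0 *v K) = \<mu> *\<^sub>R K"
    and mu: "\<mu> \<ge> 0"
    and pos: "2 * \<mu> + 2 * h * (K \<bullet> B) > 0"
  shows "(AE x in lborel.
            dir_deriv (Vfun ubar ulow P0 h K) (ffun ubar ulow A0 B K) x
              (- (1/2) * (stack x (dz ubar ulow (K \<bullet> x)) \<bullet>
                 (Qmat A0 P0 K \<mu> (2 * h * (K \<bullet> B)) *v stack x (dz ubar ulow (K \<bullet> x))))))
       \<and> ((psd P0 \<and> psd (- (transpose A0 ** P0 + P0 ** A0))
            \<and> {x. P0 *v x = 0} \<subseteq> {x. A0 *v x = 0}) \<longrightarrow>
          (\<exists>T0 R. T0 \<ge> 0 \<and> R > 0
             \<and> psd ((1/2) *\<^sub>R Qmat A0 P0 K \<mu> (2 * h * (K \<bullet> B)) - Sigma0 K T0 - SigmaR K R)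
             \<and> (AE x in lborel. \<exists>D.
                   dir_deriv (Vfun ubar ulow P0 h K) (ffun ubar ulow A0 B K) x D
                   \<and> - D \<ge> R * (sat ubar ulow (K \<bullet> x))^2)))"
proof -
  define \<omega> where "\<omega> = 2 * h * (K \<bullet> B)"
  define v where "v x = stack x (dz ubar ulow (K \<bullet> x))" for x
  let ?V = "Vfun ubar ulow P0 h K" and ?f = "ffun ubar ulow A0 B K"
    and ?s = "\<lambda>x. sat ubar ulow (K \<bullet> x)"
  have deriv: "dir_deriv ?V ?f x (- (1/2) * (v x \<bullet> (Qmat A0 P0 K \<mu> \<omega> *v v x)))" for x
    using dir_deriv_closed_loop[OF _ symP0 matching, of ulow ubar x] ubar ulow
    by (simp add: v_def Qmat_quadratic_form[OF symP0] \<omega>_def dz_def power2_eq_square algebra_simps)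
  have "\<exists>T0 R. T0 \<ge> 0 \<and> R > 0
      \<and> psd ((1/2) *\<^sub>R Qmat A0 P0 K \<mu> \<omega> - Sigma0 K T0 - SigmaR K R)
      \<and> (AE x in lborel. \<exists>D. dir_deriv ?V ?f x D \<and> - D \<ge> R * (?s x)\<^sup>2)"
    if dissipative: "psd (- (transpose A0 ** P0 + P0 ** A0))"
  proof (intro exI conjI)
    let ?M = "(1/2) *\<^sub>R Qmat A0 P0 K \<mu> \<omega> - Sigma0 K (\<mu> / 2) - SigmaR K (\<mu> + \<omega> / 2)"
    show "0 \<le> \<mu> / 2" "0 < \<mu> + \<omega> / 2"
      using mu pos by (simp_all add: \<omega>_def)
    show psd_M: "psd ?M"
      unfolding Qmat_S_procedure_certificate psd_blk_0 using dissipative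
      by (simp add: psd_def scaleR_matrix_vector_assoc[symmetric])
    show "AE x in lborel. \<exists>D. dir_deriv ?V ?f x D \<and> - D \<ge> (\<mu> + \<omega> / 2) * (?s x)\<^sup>2"
    proof (intro AE_I2 exI conjI, rule deriv)
      show "(\<mu> + \<omega> / 2) * (?s x)\<^sup>2 \<le> - (- (1/2) * (v x \<bullet> (Qmat A0 P0 K \<mu> \<omega> *v v x)))" for x
        using S_procedure_sat_bound[OF psd_M _ less_imp_le[OF ubar] less_imp_le[OF ulow]] mu
        by (simp add: v_def)
    qed
  qed
  then show ?thesis
    unfolding \<omega>_def[symmetric] v_def[symmetric] using deriv by auto
qed

end
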